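(* Let $M=\begin{pmatrix} a&b\\ 0&d\end{pmatrix}$ with $a,d$ having generalized core-EP inverses. If $a^{\pi}b=0$, then $M$ has a generalized core-EP inverse in $M_2(\mathcal{A})$ and $M^{\mathrm{gcEP}}=\begin{pmatrix} a^{\mathrm{gcEP}}&-a^{\mathrm{gcEP}}bd^{\mathrm{gcEP}}\\ 0&d^{\mathrm{gcEP}}\end{pmatrix}$.
   Context: $\mathcal{A}$ is a Banach algebra (a complex Banach *-algebra with identity, as in the whole paper), $M_2(\mathcal{A})$ the $2\times2$ matrices over $\mathcal{A}$. The generalized core-EP inverse of $a$ is the unique $x$ with $ax^2=x$, $(ax)^*=ax$, $\lim_{n\to\infty}\|a^n-xa^{n+1}\|^{1/n}=0$, denoted $a^{\mathrm{gcEP}}$. $a^{\pi}=1-aa^d$, with $a^d$ the generalized Drazin inverse. *)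

theory Defs
  imports "HOL-Analysis.Analysis"
begin

text \<open>The complex scalar structure is
  not modelled: we work over real scalars, a complex Banach *-algebra being in
  particular a real one (the involution is conjugate-linear, hence real-linear).\<close>
class banach_star_algebra = real_normed_algebra_1 + banach +
  fixes invol :: "'a \<Rightarrow> 'a"
  assumes invol_add: "invol (x + y) = invol x + invol y"
    and invol_mult: "invol (x * y) = invol y * invol x"
    and invol_invol: "invol (invol x) = x"
    and invol_scaleR: "invol (scaleR r x) = scaleR r (invol x)"

definition quasinil :: "'a::banach_star_algebra \<Rightarrow> bool" where
  "quasinil q \<longleftrightarrow> (\<lambda>n. root n (norm (q ^ n))) \<longlonglongrightarrow> 0"

definition is_gDrazin :: "'a::banach_star_algebra \<Rightarrow> 'a \<Rightarrow> bool" where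
  "is_gDrazin a x \<longleftrightarrow> x * a * x = x \<and> a * x = x * a \<and> quasinil (a - a * a * x)"

definition gDrazin :: "'a::banach_star_algebra \<Rightarrow> 'a" where
  "gDrazin a = (THE x. is_gDrazin a x)"

definition api :: "'a::banach_star_algebra \<Rightarrow> 'a" where
  "api a = 1 - a * gDrazin a"

definition is_gcEP :: "'a::banach_star_algebra \<Rightarrow> 'a \<Rightarrow> bool" where
  "is_gcEP a x \<longleftrightarrow> a * x ^ 2 = x \<and> invol (a * x) = a * x \<and>
     (\<lambda>n. root n (norm (a ^ n - x * a ^ (Suc n)))) \<longlonglongrightarrow> 0"

definition gcEP :: "'a::banach_star_algebra \<Rightarrow> 'a" where
  "gcEP a = (THE x. is_gcEP a x)"

text \<open>2x2 matrices over the algebra: Mat2 a b c d = [[a,b],[c,d]].\<close>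
datatype 'a mat2 = Mat2 'a 'a 'a 'a

fun m2mult :: "'a::banach_star_algebra mat2 \<Rightarrow> 'a mat2 \<Rightarrow> 'a mat2" where
  "m2mult (Mat2 a b c d) (Mat2 e f g h) =
     Mat2 (a * e + b * g) (a * f + b * h) (c * e + d * g) (c * f + d * h)"

fun m2minus :: "'a::banach_star_algebra mat2 \<Rightarrow> 'a mat2 \<Rightarrow> 'a mat2" where
  "m2minus (Mat2 a b c d) (Mat2 e f g h) = Mat2 (a - e) (b - f) (c - g) (d - h)"

fun m2invol :: "'a::banach_star_algebra mat2 \<Rightarrow> 'a mat2" where
  "m2invol (Mat2 a b c d) = Mat2 (invol a) (invol c) (invol b) (invol d)"

definition m2one :: "'a::banach_star_algebra mat2" where
  "m2one = Mat2 1 0 0 1"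

fun m2pow :: "'a::banach_star_algebra mat2 \<Rightarrow> nat \<Rightarrow> 'a mat2" where
  "m2pow M 0 = m2one"
| "m2pow M (Suc n) = m2mult M (m2pow M n)"

text \<open>A Banach algebra norm on M_2(A) (all such norms are equivalent, and the
  condition lim ||.||^(1/n) = 0 does not depend on the choice).\<close>
fun m2norm :: "'a::banach_star_algebra mat2 \<Rightarrow> real" where
  "m2norm (Mat2 a b c d) = norm a + norm b + norm c + norm d"

definition is_gcEP2 :: "'a::banach_star_algebra mat2 \<Rightarrow> 'a mat2 \<Rightarrow> bool" where
  "is_gcEP2 M X \<longleftrightarrow> m2mult M (m2mult X X) = X \<and> m2invol (m2mult M X) = m2mult M X \<and>
     (\<lambda>n. root n (m2norm (m2minus (m2pow M n) (m2mult X (m2pow M (Suc n)))))) \<longlonglongrightarrow> 0"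

definition gcEP2 :: "'a::banach_star_algebra mat2 \<Rightarrow> 'a mat2" where
  "gcEP2 M = (THE X. is_gcEP2 M X)"

end

theory Submission
  imports Defs
begin

(* If x is the generalized core-EP inverse of a, then x = a^n x^(n+1) for all n, so an element
   bounded by C ||a^n - x a^(n+1)|| L^n for all n is zero.  This forces all algebraic identities
   of x; in particular the inverse is unique in any ring with an involution and a
   submultiplicative norm, hence also in M_2(A).  The series x + sum_n x^(n+2) a u^n (1 - ax),
   u = (1 - ax) a, converges by the root test and is the generalized Drazin inverse a^d of a;
   it satisfies (ax) a a^d = a a^d, so a^pi b = 0 forces ax b = b.  Then X = [[x, -xby], [0, y]]
   satisfies the defining conditions for M = [[a, b], [0, d]]: MX = diag(ax, dy), and the corner
   of M^n - X M^(n+1) is -xb (d^n - y d^(n+1)). *)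

section \<open>Sequences whose n-th roots tend to zero\<close>

definition root_null :: "(nat \<Rightarrow> real) \<Rightarrow> bool" where
  "root_null f \<longleftrightarrow> (\<lambda>n. root n (f n)) \<longlonglongrightarrow> 0"

lemma root_null_iff_eventually_le_power:
  assumes nonneg: "\<And>n. 0 \<le> f n"
  shows "root_null f \<longleftrightarrow> (\<forall>e>0. eventually (\<lambda>n. f n \<le> e ^ n) sequentially)"
proof
  assume null: "root_null f"
  show "\<forall>e>0. eventually (\<lambda>n. f n \<le> e ^ n) sequentially"
  proof (intro allI impI)
    fix e :: real assume e: "e > 0"
    have "eventually (\<lambda>n. root n (f n) < e) sequentially"
      using null e unfolding root_null_def by (rule order_tendstoD)
    with eventually_gt_at_top[of 0]
    show "eventually (\<lambda>n. f n \<le> e ^ n) sequentially"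
    proof eventually_elim
      case (elim n)
      have "f n = root n (f n) ^ n" using elim nonneg by simp
      also have "\<dots> \<le> e ^ n" using elim nonneg by (intro power_mono) auto
      finally show ?case .
    qed
  qed
next
  assume bound: "\<forall>e>0. eventually (\<lambda>n. f n \<le> e ^ n) sequentially"
  show "root_null f" unfolding root_null_def
  proof (rule order_tendstoI)
    fix e :: real assume "e < 0"
    then show "eventually (\<lambda>n. e < root n (f n)) sequentially"
      by (intro always_eventually allI) (metis nonneg real_root_ge_zero less_le_trans)
  next
    fix e :: real assume e: "0 < e"
    have "eventually (\<lambda>n. f n \<le> (e/2) ^ n) sequentially" using bound e by simp
    with eventually_gt_at_top[of 0]
    show "eventually (\<lambda>n. root n (f n) < e) sequentially"
    proof eventually_elim
      case (elim n)
      have "root n (f n) \<le> root n ((e/2) ^ n)" using elim by (simp add: real_root_le_mono)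
      also have "\<dots> = e/2" using elim e by (simp add: real_root_power_cancel)
      finally show ?case using e by simp
    qed
  qed
qed

lemma root_null_lower_bound_eq_0:
  assumes "0 \<le> C" "\<And>n. C \<le> f n" "root_null f"
  shows "C = 0"
proof -
  have "\<And>n. 0 \<le> f n" using assms(1,2) order_trans by blast
  then have "eventually (\<lambda>n. f n \<le> (1/2) ^ n) sequentially"
    using assms(3) by (simp add: root_null_iff_eventually_le_power)
  then have "eventually (\<lambda>n. C \<le> (1/2::real) ^ n) sequentially"
    by eventually_elim (use assms(2) order_trans in blast)
  moreover have "(\<lambda>n. (1/2::real) ^ n) \<longlonglongrightarrow> 0"
    by (rule LIMSEQ_power_zero) simp
  ultimately have "C \<le> 0"
    by (intro tendsto_le[OF _ _ tendsto_const]) auto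
  with assms(1) show ?thesis by simp
qed

lemma root_null_mono:
  assumes g_nonneg: "\<And>n. 0 \<le> g n" and le: "\<And>n. g n \<le> f n" and "root_null f"
  shows "root_null g"
proof -
  have f_nonneg: "\<And>n. 0 \<le> f n" using g_nonneg le order_trans by blast
  show ?thesis
    using assms(3)
    unfolding root_null_iff_eventually_le_power[OF g_nonneg]
      root_null_iff_eventually_le_power[OF f_nonneg]
    by (metis (mono_tags, lifting) le eventually_mono order_trans)
qed

lemma root_null_const_mult:
  assumes "0 \<le> K" "root_null f"
  shows "root_null (\<lambda>n. K * f n)"
proof (cases "K = 0")
  case True then show ?thesis by (simp add: root_null_def)
next
  case False
  with assms have "K > 0" by simp
  then have "(\<lambda>n. root n K * root n (f n)) \<longlonglongrightarrow> 1 * 0"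
    using assms(2) unfolding root_null_def by (intro tendsto_mult LIMSEQ_root_const)
  then show ?thesis unfolding root_null_def by (simp add: real_root_mult)
qed

lemma root_null_mult_power:
  assumes "0 \<le> L" "root_null f"
  shows "root_null (\<lambda>n. f n * L ^ n)"
proof -
  have "(\<lambda>n. root n (f n) * L) \<longlonglongrightarrow> 0 * L"
    using assms(2) unfolding root_null_def by (intro tendsto_mult tendsto_const)
  moreover have "eventually (\<lambda>n. root n (f n) * L = root n (f n * L ^ n)) sequentially"
    using eventually_gt_at_top[of 0]
    by eventually_elim (use assms(1) in \<open>simp add: real_root_mult real_root_power_cancel\<close>)
  ultimately show ?thesis unfolding root_null_def by (simp add: tendsto_cong)
qed

lemma root_null_add:
  assumes "\<And>n. 0 \<le> f n" "\<And>n. 0 \<le> g n" "root_null f" "root_null g"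
  shows "root_null (\<lambda>n. f n + g n)"
proof -
  have "(\<lambda>n. max (root n (f n)) (root n (g n))) \<longlonglongrightarrow> max 0 0"
    using assms(3,4) unfolding root_null_def by (rule tendsto_max)
  moreover have "eventually (\<lambda>n. max (root n (f n)) (root n (g n)) = root n (max (f n) (g n)))
      sequentially"
    using eventually_gt_at_top[of 0] by eventually_elim (auto simp: max_def)
  ultimately have "root_null (\<lambda>n. max (f n) (g n))"
    unfolding root_null_def by (simp add: tendsto_cong)
  then have "root_null (\<lambda>n. 2 * max (f n) (g n))" by (rule root_null_const_mult[rotated]) simp
  then show ?thesis by (rule root_null_mono[rotated 2]) (auto simp: assms(1,2) add_nonneg_nonneg)
qed

lemma root_null_Suc_iff:
  assumes nonneg: "\<And>n. 0 \<le> f n"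
  shows "root_null (\<lambda>n. f (Suc n)) \<longleftrightarrow> root_null f"
  unfolding root_null_iff_eventually_le_power[OF nonneg]
    root_null_iff_eventually_le_power[of "\<lambda>n. f (Suc n)", OF nonneg]
proof (intro iffI allI impI)
  fix e :: real
  assume null_Suc: "\<forall>e>0. eventually (\<lambda>n. f (Suc n) \<le> e ^ n) sequentially" and e: "e > 0"
  define d where "d = min e 1"
  have d: "0 < d" "d \<le> e" "d \<le> 1" using e by (auto simp: d_def)
  have "eventually (\<lambda>n. f (Suc n) \<le> (d * d) ^ n) sequentially" using null_Suc d by simp
  with eventually_gt_at_top[of 0]
  have "eventually (\<lambda>n. f (Suc n) \<le> e ^ Suc n) sequentially"
  proof eventually_elim
    case (elim n)
    have "(d * d) ^ n = d ^ n * d ^ n" by (simp add: power_mult_distrib)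
    also have "\<dots> \<le> d ^ n * d"
      using d elim power_decreasing[of 1 n d] by (intro mult_left_mono) auto
    also have "\<dots> \<le> e ^ Suc n" using d power_mono[of d e "Suc n"] by (simp add: mult.commute)
    finally show ?case using elim by simp
  qed
  then show "eventually (\<lambda>n. f n \<le> e ^ n) sequentially"
    by (simp only: eventually_sequentially_Suc[of "\<lambda>n. f n \<le> e ^ n"])
next
  fix e :: real
  assume null: "\<forall>e>0. eventually (\<lambda>n. f n \<le> e ^ n) sequentially" and e: "e > 0"
  define d where "d = min e 1"
  have d: "0 < d" "d \<le> e" "d \<le> 1" using e by (auto simp: d_def)
  have "eventually (\<lambda>n. f (Suc n) \<le> d ^ Suc n) sequentially"
    using null d by (simp only: eventually_sequentially_Suc[of "\<lambda>n. f n \<le> d ^ n"])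
  then show "eventually (\<lambda>n. f (Suc n) \<le> e ^ n) sequentially"
  proof eventually_elim
    case (elim n)
    have "d ^ Suc n \<le> d ^ n" using d by (intro power_decreasing) auto
    also have "\<dots> \<le> e ^ n" using d by (intro power_mono) auto
    finally show ?case using elim by simp
  qed
qed

section \<open>Generalized inverses in normed rings with involution\<close>

lemma power_mult_distrib_commuting:
  fixes a b :: "'a::monoid_mult"
  assumes "a * b = b * a"
  shows "(a * b) ^ n = a ^ n * b ^ n"
proof (induct n)
  case 0 then show ?case by simp
next
  case (Suc n)
  have "(a * b) ^ Suc n = a * (b * a ^ n) * b ^ n" by (simp add: Suc mult.assoc)
  also have "\<dots> = a * (a ^ n * b) * b ^ n"
    using power_commuting_commutes[OF assms, of n] by simp
  finally show ?case by (simp add: mult.assoc)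
qed

lemma idempotent_power_Suc:
  fixes r :: "'a::monoid_mult"
  shows "r * r = r \<Longrightarrow> r ^ Suc k = r"
  by (induct k) (simp_all add: mult.assoc[symmetric])

(* Instantiated both by A and by M_2(A); the latter is not a banach_star_algebra, as its norm
   has m2norm 1 = 2. *)
locale normed_star_ring =
  fixes star :: "'a::ring_1 \<Rightarrow> 'a" and nrm :: "'a \<Rightarrow> real"
  assumes star_mult: "star (x * y) = star y * star x"
    and nrm_nonneg: "0 \<le> nrm x"
    and nrm_eq_0D: "nrm x = 0 \<Longrightarrow> x = 0"
    and nrm_triangle: "nrm (x + y) \<le> nrm x + nrm y"
    and nrm_mult: "nrm (x * y) \<le> nrm x * nrm y"
    and nrm_minus: "nrm (- x) = nrm x"
begin

definition is_gcep :: "'a \<Rightarrow> 'a \<Rightarrow> bool" where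
  "is_gcep M X \<longleftrightarrow> M * (X * X) = X \<and> star (M * X) = M * X \<and>
     root_null (\<lambda>n. nrm (M ^ n - X * M ^ Suc n))"

definition is_gdrazin :: "'a \<Rightarrow> 'a \<Rightarrow> bool" where
  "is_gdrazin a z \<longleftrightarrow> z * a * z = z \<and> a * z = z * a \<and>
     root_null (\<lambda>n. nrm ((a - a * a * z) ^ n))"

lemma nrm_power: "nrm (x ^ Suc n) \<le> nrm x ^ Suc n"
proof (induct n)
  case 0 then show ?case by simp
next
  case (Suc n)
  have "nrm (x ^ Suc (Suc n)) \<le> nrm x * nrm (x ^ Suc n)" by (metis nrm_mult power_Suc)
  also have "\<dots> \<le> nrm x * nrm x ^ Suc n" by (intro mult_left_mono Suc nrm_nonneg)
  finally show ?case by simp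
qed

lemma nrm_diff_le: "nrm (x - y) \<le> nrm x + nrm y"
  using nrm_triangle[of x "- y"] by (simp add: nrm_minus)

lemma nrm_minus_commute: "nrm (x - y) = nrm (y - x)"
  using nrm_minus[of "x - y"] by simp

lemma eq_0_if_root_null_bound:
  assumes "root_null e" "\<And>n. 0 \<le> e n" "0 \<le> K" "0 \<le> L" "\<And>n. nrm z \<le> K * e n * L ^ n"
  shows "z = 0"
proof -
  have "root_null (\<lambda>n. K * e n * L ^ n)"
    using assms by (intro root_null_mult_power root_null_const_mult) auto
  then have "nrm z = 0" using assms(5) nrm_nonneg by (intro root_null_lower_bound_eq_0) auto
  then show ?thesis by (rule nrm_eq_0D)
qed

context
  fixes M X assumes gcep: "is_gcep M X"
begin

lemma gcep_square: "M * (X * X) = X"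
  using gcep by (simp add: is_gcep_def)

lemma gcep_star: "star (M * X) = M * X"
  using gcep by (simp add: is_gcep_def)

lemma gcep_root_null: "root_null (\<lambda>n. nrm (M ^ n - X * M ^ Suc n))"
  using gcep by (simp add: is_gcep_def)

lemma gcep_eq_power_mult: "X = M ^ n * X ^ Suc n"
proof (induct n)
  case 0 then show ?case by simp
next
  case (Suc n)
  have "M ^ Suc n * X ^ Suc (Suc n) = M ^ n * (M * (X * X)) * X ^ n"
    by (simp only: power_Suc2[of M n] power_Suc[of X "Suc n"] power_Suc[of X n] mult.assoc)
  also have "\<dots> = M ^ n * X ^ Suc n" by (simp add: gcep_square mult.assoc)
  finally show ?case using Suc by simp
qed

lemma gcep_proj_eq_power_mult: "M * X = M ^ Suc n * X ^ Suc n"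
  using gcep_eq_power_mult[of n] by (simp add: mult.assoc)

lemma gcep_outer_inverse: "X * M * X = X"
proof -
  have eq: "X * M * X - X = (X * M ^ Suc n - M ^ n) * X ^ Suc n" for n
  proof -
    have "(X * M ^ Suc n - M ^ n) * X ^ Suc n = X * M * (M ^ n * X ^ Suc n) - M ^ n * X ^ Suc n"
      by (simp add: algebra_simps)
    then show ?thesis by (simp only: gcep_eq_power_mult[of n, symmetric])
  qed
  have "X * M * X - X = 0"
  proof (rule eq_0_if_root_null_bound[OF gcep_root_null nrm_nonneg _ nrm_nonneg])
    fix n
    have "nrm (X * M * X - X) \<le> nrm (X * M ^ Suc n - M ^ n) * nrm (X ^ Suc n)"
      unfolding eq[of n] by (rule nrm_mult)
    also have "\<dots> \<le> nrm (M ^ n - X * M ^ Suc n) * nrm X ^ Suc n"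
      by (rule mult_mono[OF order_eq_refl[OF nrm_minus_commute] nrm_power nrm_nonneg nrm_nonneg])
    finally show "nrm (X * M * X - X) \<le> nrm X * nrm (M ^ n - X * M ^ Suc n) * nrm X ^ n"
      by (simp add: mult_ac)
  qed (rule nrm_nonneg)
  then show ?thesis by simp
qed

lemma gcep_proj_idem: "(M * X) * (M * X) = M * X"
  by (metis gcep_outer_inverse mult.assoc)

lemma gcep_proj_mult: "(M * X) * X = X"
  by (metis gcep_square mult.assoc)

lemma gcep_mult_proj: "X * (M * X) = X"
  by (metis gcep_outer_inverse mult.assoc)

lemma gcep_root_null_compl_power: "root_null (\<lambda>n. nrm ((1 - M * X) * M ^ Suc n))"
proof -
  have "(1 - M * X) * M ^ Suc n = M * (M ^ n - X * M ^ Suc n)" for n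
    by (simp add: right_diff_distrib left_diff_distrib mult.assoc)
  then have "nrm ((1 - M * X) * M ^ Suc n) \<le> nrm M * nrm (M ^ n - X * M ^ Suc n)" for n
    by (simp only: nrm_mult)
  then show ?thesis
    by (rule root_null_mono[OF nrm_nonneg _ root_null_const_mult[OF nrm_nonneg gcep_root_null]])
qed

lemma gcep_XM_proj: "X * M * (M * X) = M * X"
proof -
  have eq: "X * M * (M * X) - M * X = (X * M ^ Suc (Suc n) - M ^ Suc n) * X ^ Suc n" for n
  proof -
    have "(X * M ^ Suc (Suc n) - M ^ Suc n) * X ^ Suc n
        = X * M * (M ^ Suc n * X ^ Suc n) - M ^ Suc n * X ^ Suc n"
      by (simp add: algebra_simps)
    then show ?thesis by (simp only: gcep_proj_eq_power_mult[of n, symmetric])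
  qed
  have null: "root_null (\<lambda>n. nrm (M ^ Suc n - X * M ^ Suc (Suc n)))"
    using gcep_root_null by (subst root_null_Suc_iff) (auto intro: nrm_nonneg)
  have "X * M * (M * X) - M * X = 0"
  proof (rule eq_0_if_root_null_bound[OF null nrm_nonneg _ nrm_nonneg])
    fix n
    have "nrm (X * M * (M * X) - M * X)
        \<le> nrm (X * M ^ Suc (Suc n) - M ^ Suc n) * nrm (X ^ Suc n)"
      unfolding eq[of n] by (rule nrm_mult)
    also have "\<dots> \<le> nrm (M ^ Suc n - X * M ^ Suc (Suc n)) * nrm X ^ Suc n"
      by (rule mult_mono[OF order_eq_refl[OF nrm_minus_commute] nrm_power nrm_nonneg nrm_nonneg])
    finally show "nrm (X * M * (M * X) - M * X)
        \<le> nrm X * nrm (M ^ Suc n - X * M ^ Suc (Suc n)) * nrm X ^ n"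
      by (simp add: mult_ac)
  qed (rule nrm_nonneg)
  then show ?thesis by simp
qed

lemma gcep_compl_mult_proj: "(1 - M * X) * M * (M * X) = 0"
proof -
  have eq: "(1 - M * X) * M * (M * X) = ((1 - M * X) * M ^ Suc n) * (M * X ^ Suc n)" for n
  proof -
    have "(1 - M * X) * M * (M * X) = (1 - M * X) * M * (M ^ Suc n * X ^ Suc n)"
      by (simp only: gcep_proj_eq_power_mult[of n, symmetric])
    also have "\<dots> = ((1 - M * X) * M ^ Suc n) * (M * X ^ Suc n)"
      by (metis power_commutes mult.assoc)
    finally show ?thesis .
  qed
  show ?thesis
  proof (rule eq_0_if_root_null_bound[OF gcep_root_null_compl_power nrm_nonneg _ nrm_nonneg])
    fix n
    have "nrm ((1 - M * X) * M * (M * X))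
        \<le> nrm ((1 - M * X) * M ^ Suc n) * nrm (M * X ^ Suc n)"
      unfolding eq[of n] by (rule nrm_mult)
    also have "\<dots> \<le> nrm ((1 - M * X) * M ^ Suc n) * (nrm M * nrm X ^ Suc n)"
      by (intro mult_left_mono nrm_nonneg order_trans[OF nrm_mult]
          mult_left_mono[OF nrm_power nrm_nonneg])
    finally show "nrm ((1 - M * X) * M * (M * X))
        \<le> (nrm M * nrm X) * nrm ((1 - M * X) * M ^ Suc n) * nrm X ^ n"
      by (simp add: mult_ac)
  qed (intro mult_nonneg_nonneg nrm_nonneg)
qed


lemma gcep_proj_invariant: "M * (M * X) = M * X * M * (M * X)"
  using gcep_compl_mult_proj by (simp add: left_diff_distrib)

end

lemma gcep_proj_absorb:
  assumes gX: "is_gcep M X" and gY: "is_gcep M Y"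
  shows "(M * Y) * (M * X) = M * X"
proof -
  have eq: "(M * Y) * (M * X) - M * X = - (((1 - M * Y) * M ^ Suc n) * X ^ Suc n)" for n
  proof -
    have "((1 - M * Y) * M ^ Suc n) * X ^ Suc n = (1 - M * Y) * (M * X)"
      by (simp only: mult.assoc gcep_proj_eq_power_mult[OF gX, of n, symmetric])
    then show ?thesis by (simp add: left_diff_distrib)
  qed
  have "(M * Y) * (M * X) - M * X = 0"
  proof (rule eq_0_if_root_null_bound[OF gcep_root_null_compl_power[OF gY] nrm_nonneg _ nrm_nonneg])
    fix n
    have "nrm ((M * Y) * (M * X) - M * X) \<le> nrm ((1 - M * Y) * M ^ Suc n) * nrm (X ^ Suc n)"
      unfolding eq[of n] nrm_minus by (rule nrm_mult)
    also have "\<dots> \<le> nrm ((1 - M * Y) * M ^ Suc n) * nrm X ^ Suc n"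
      by (rule mult_left_mono[OF nrm_power nrm_nonneg])
    finally show "nrm ((M * Y) * (M * X) - M * X)
        \<le> nrm X * nrm ((1 - M * Y) * M ^ Suc n) * nrm X ^ n"
      by (simp add: mult_ac)
  qed (rule nrm_nonneg)
  then show ?thesis by simp
qed

lemma gcep_unique:
  assumes gX: "is_gcep M X" and gY: "is_gcep M Y"
  shows "X = Y"
proof -
  have proj_eq: "M * X = M * Y"
  proof -
    have "M * X = star ((M * Y) * (M * X))" by (simp add: gcep_proj_absorb[OF gX gY] gcep_star[OF gX])
    also have "\<dots> = (M * X) * (M * Y)"
      using star_mult[of "M * Y" "M * X"] by (simp only: gcep_star[OF gX] gcep_star[OF gY])
    also have "\<dots> = M * Y" by (rule gcep_proj_absorb[OF gY gX])
    finally show ?thesis .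
  qed
  have eq: "X - Y = ((X * M ^ Suc n - M ^ n) - (Y * M ^ Suc n - M ^ n)) * X ^ Suc n" for n
  proof -
    have "((X * M ^ Suc n - M ^ n) - (Y * M ^ Suc n - M ^ n)) * X ^ Suc n
        = (X - Y) * (M ^ Suc n * X ^ Suc n)"
      by (simp add: algebra_simps)
    also have "\<dots> = X * (M * X) - Y * (M * Y)"
      by (simp only: gcep_proj_eq_power_mult[OF gX, of n, symmetric])
        (simp add: left_diff_distrib proj_eq)
    also have "\<dots> = X - Y" by (simp add: gcep_mult_proj[OF gX] gcep_mult_proj[OF gY])
    finally show ?thesis by simp
  qed
  let ?e = "\<lambda>n. nrm (M ^ n - X * M ^ Suc n) + nrm (M ^ n - Y * M ^ Suc n)"
  have null: "root_null ?e"
    by (rule root_null_add[OF nrm_nonneg nrm_nonneg gcep_root_null[OF gX] gcep_root_null[OF gY]])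
  have "X - Y = 0"
  proof (rule eq_0_if_root_null_bound[OF null _ _ nrm_nonneg])
    fix n
    have "nrm (X - Y) \<le> nrm ((X * M ^ Suc n - M ^ n) - (Y * M ^ Suc n - M ^ n)) * nrm (X ^ Suc n)"
      unfolding eq[of n] by (rule nrm_mult)
    also have "\<dots> \<le> ?e n * nrm X ^ Suc n"
    proof (rule mult_mono[OF _ nrm_power add_nonneg_nonneg[OF nrm_nonneg nrm_nonneg] nrm_nonneg])
      show "nrm ((X * M ^ Suc n - M ^ n) - (Y * M ^ Suc n - M ^ n)) \<le> ?e n"
        using nrm_diff_le[of "X * M ^ Suc n - M ^ n" "Y * M ^ Suc n - M ^ n"]
        by (simp only: nrm_minus_commute[of "X * M ^ Suc n"] nrm_minus_commute[of "Y * M ^ Suc n"])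
    qed
    finally show "nrm (X - Y) \<le> nrm X * ?e n * nrm X ^ n"
      by (simp add: mult_ac)
  qed (auto intro: add_nonneg_nonneg nrm_nonneg)
  then show ?thesis by simp
qed

lemma gdrazin_residual_power:
  assumes "is_gdrazin a y"
  shows "(a - a * a * y) ^ Suc k = (1 - a * y) * a ^ Suc k"
    and "(a - a * a * y) ^ Suc k = a ^ Suc k * (1 - a * y)"
proof -
  have cy: "a * y = y * a" and yay: "y * a * y = y" using assms by (auto simp: is_gdrazin_def)
  have "(1 - a * y) * (1 - a * y) = 1 - a * y"
  proof -
    have "(a * y) * (a * y) = a * y" by (metis yay mult.assoc)
    then show ?thesis by (simp add: algebra_simps)
  qed
  moreover have commute: "(1 - a * y) * a = a * (1 - a * y)"
  proof -
    have "a * (a * y) = (a * y) * a" by (metis cy mult.assoc)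
    then show ?thesis by (simp add: algebra_simps)
  qed
  moreover have "a - a * a * y = (1 - a * y) * a"
    by (simp add: left_diff_distrib mult.assoc flip: cy)
  ultimately show left: "(a - a * a * y) ^ Suc k = (1 - a * y) * a ^ Suc k"
    using power_mult_distrib_commuting[of "1 - a * y" a "Suc k"] idempotent_power_Suc[of "1 - a * y" k]
    by simp
  show "(a - a * a * y) ^ Suc k = a ^ Suc k * (1 - a * y)"
    using power_commuting_commutes[OF commute[symmetric], of "Suc k"] by (simp only: left)
qed

lemma gdrazin_proj_power:
  assumes "is_gdrazin a x"
  shows "a * x = a ^ Suc n * x ^ Suc n" and "a * x = x ^ Suc n * a ^ Suc n"
proof -
  have cx: "a * x = x * a" and xax: "x * a * x = x" using assms by (auto simp: is_gdrazin_def)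
  have "(a * x) * (a * x) = a * x" by (metis xax mult.assoc)
  then show "a * x = a ^ Suc n * x ^ Suc n"
    using power_mult_distrib_commuting[OF cx, of "Suc n"] idempotent_power_Suc by metis
  have "(x * a) * (x * a) = x * a" by (metis xax mult.assoc)
  then show "a * x = x ^ Suc n * a ^ Suc n"
    using power_mult_distrib_commuting[OF cx[symmetric], of "Suc n"] idempotent_power_Suc cx by metis
qed

lemma gdrazin_proj_orthogonal:
  assumes gx: "is_gdrazin a x" and gy: "is_gdrazin a y"
  shows "(1 - a * y) * (a * x) = 0 \<and> (a * x) * (1 - a * y) = 0"
proof -
  define r where "r = 1 - a * y"
  define w where "w = a - a * a * y"
  have "root_null (\<lambda>n. nrm (w ^ n))" using gy by (simp add: is_gdrazin_def w_def)
  then have null: "root_null (\<lambda>n. nrm (w ^ Suc n))"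
    by (subst root_null_Suc_iff) (auto intro: nrm_nonneg)
  note w_power = gdrazin_residual_power[OF gy, folded w_def r_def]
  have eq: "r * (a * x) = w ^ Suc n * x ^ Suc n" "(a * x) * r = x ^ Suc n * w ^ Suc n" for n
    by (simp only: gdrazin_proj_power(1)[OF gx, of n] w_power(1) mult.assoc,
        simp only: gdrazin_proj_power(2)[OF gx, of n] w_power(2) mult.assoc)
  have bound: "nrm (r * (a * x)) \<le> nrm x * nrm (w ^ Suc n) * nrm x ^ n"
    "nrm ((a * x) * r) \<le> nrm x * nrm (w ^ Suc n) * nrm x ^ n" for n
    unfolding eq[of n] using nrm_mult[of "w ^ Suc n" "x ^ Suc n"] nrm_mult[of "x ^ Suc n" "w ^ Suc n"]
      mult_left_mono[OF nrm_power[of x n] nrm_nonneg[of "w ^ Suc n"]]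
    by (simp_all add: mult_ac)
  note vanish = eq_0_if_root_null_bound[OF null nrm_nonneg, of "nrm x" "nrm x"]
  have "r * (a * x) = 0" by (rule vanish) (simp_all only: nrm_nonneg bound)
  moreover have "(a * x) * r = 0" by (rule vanish) (simp_all only: nrm_nonneg bound)
  ultimately show ?thesis by (simp add: r_def)
qed

lemma gdrazin_unique:
  assumes gx: "is_gdrazin a x" and gy: "is_gdrazin a y"
  shows "x = y"
proof -
  have cx: "a * x = x * a" and cy: "a * y = y * a" and xax: "x * a * x = x" and yay: "y * a * y = y"
    using gx gy by (auto simp: is_gdrazin_def)
  have "a * y = (a * x) * (a * y)"
    using gdrazin_proj_orthogonal[OF gy gx] by (simp add: left_diff_distrib)
  also have "\<dots> = a * x"
    using gdrazin_proj_orthogonal[OF gx gy] by (simp add: right_diff_distrib)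
  finally have proj_eq: "a * x = a * y" ..
  have "x = x * a * x" by (rule xax[symmetric])
  also have "\<dots> = (a * y) * y" by (metis cx proj_eq mult.assoc)
  also have "\<dots> = y" by (simp only: cy yay)
  finally show ?thesis .
qed

end

section \<open>The ring of 2 x 2 matrices\<close>

fun m2plus :: "'a::banach_star_algebra mat2 \<Rightarrow> 'a mat2 \<Rightarrow> 'a mat2" where
  "m2plus (Mat2 a b c d) (Mat2 e f g h) = Mat2 (a + e) (b + f) (c + g) (d + h)"

fun m2uminus :: "'a::banach_star_algebra mat2 \<Rightarrow> 'a mat2" where
  "m2uminus (Mat2 a b c d) = Mat2 (- a) (- b) (- c) (- d)"

instantiation mat2 :: (banach_star_algebra) ring_1
begin

definition zero_mat2 :: "'a mat2" where "zero_mat2 = Mat2 0 0 0 0"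
definition one_mat2 :: "'a mat2" where "one_mat2 = m2one"
definition plus_mat2 :: "'a mat2 \<Rightarrow> 'a mat2 \<Rightarrow> 'a mat2" where "plus_mat2 = m2plus"
definition minus_mat2 :: "'a mat2 \<Rightarrow> 'a mat2 \<Rightarrow> 'a mat2" where "minus_mat2 = m2minus"
definition uminus_mat2 :: "'a mat2 \<Rightarrow> 'a mat2" where "uminus_mat2 = m2uminus"
definition times_mat2 :: "'a mat2 \<Rightarrow> 'a mat2 \<Rightarrow> 'a mat2" where "times_mat2 = m2mult"

instance
proof
  fix A B C :: "'a mat2"
  show "A * B * C = A * (B * C)"
    by (cases A; cases B; cases C) (simp add: times_mat2_def algebra_simps)
  show "A + B + C = A + (B + C)"
    by (cases A; cases B; cases C) (simp add: plus_mat2_def algebra_simps)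
  show "A + B = B + A"
    by (cases A; cases B) (simp add: plus_mat2_def algebra_simps)
  show "0 + A = A"
    by (cases A) (simp add: plus_mat2_def zero_mat2_def)
  show "- A + A = 0"
    by (cases A) (simp add: plus_mat2_def zero_mat2_def uminus_mat2_def)
  show "A - B = A + - B"
    by (cases A; cases B) (simp add: plus_mat2_def minus_mat2_def uminus_mat2_def)
  show "(A + B) * C = A * C + B * C"
    by (cases A; cases B; cases C) (simp add: plus_mat2_def times_mat2_def algebra_simps)
  show "A * (B + C) = A * B + A * C"
    by (cases A; cases B; cases C) (simp add: plus_mat2_def times_mat2_def algebra_simps)
  show "1 * A = A"
    by (cases A) (simp add: one_mat2_def times_mat2_def m2one_def)
  show "A * 1 = A"
    by (cases A) (simp add: one_mat2_def times_mat2_def m2one_def)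
  show "(0::'a mat2) \<noteq> 1"
    by (simp add: one_mat2_def zero_mat2_def m2one_def)
qed

end

lemma m2pow_eq_power: "m2pow M n = M ^ n"
  by (induct n) (simp_all add: one_mat2_def times_mat2_def)

lemma m2norm_m2mult_le: "m2norm (m2mult A B) \<le> m2norm A * m2norm B"
proof (cases A; cases B)
  fix a b c d e f g h :: 'a
  assume AB: "A = Mat2 a b c d" "B = Mat2 e f g h"
  have entry: "norm (x * y + z * w) \<le> norm x * norm y + norm z * norm w" for x y z w :: 'a
    by (rule order_trans[OF norm_triangle_ineq add_mono[OF norm_mult_ineq norm_mult_ineq]])
  have "m2norm (m2mult A B)
      \<le> (norm a * norm e + norm b * norm g) + (norm a * norm f + norm b * norm h)
        + (norm c * norm e + norm d * norm g) + (norm c * norm f + norm d * norm h)"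
    unfolding AB m2mult.simps m2norm.simps
    using entry[of a e b g] entry[of a f b h] entry[of c e d g] entry[of c f d h] by linarith
  also have "\<dots> \<le> m2norm A * m2norm B"
    unfolding AB m2norm.simps by (simp add: algebra_simps)
  finally show ?thesis .
qed

lemma invol_zero: "invol (0::'a::banach_star_algebra) = 0"
  using invol_add[of "0::'a" 0] by simp

interpretation alg: normed_star_ring "invol :: 'a::banach_star_algebra \<Rightarrow> 'a" norm
  by unfold_locales (auto simp: invol_mult norm_triangle_ineq norm_mult_ineq)

interpretation mat: normed_star_ring "m2invol :: 'a::banach_star_algebra mat2 \<Rightarrow> 'a mat2" m2norm
proof
  fix x y :: "'a mat2"
  show "m2invol (x * y) = m2invol y * m2invol x"
    by (cases x; cases y) (simp add: times_mat2_def invol_add invol_mult)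
  show "0 \<le> m2norm x" by (cases x) simp
  show "m2norm x = 0 \<Longrightarrow> x = 0"
    by (cases x) (simp add: zero_mat2_def add_nonneg_eq_0_iff)
  show "m2norm (x + y) \<le> m2norm x + m2norm y"
    by (cases x; cases y) (simp add: plus_mat2_def, smt (verit) norm_triangle_ineq)
  show "m2norm (x * y) \<le> m2norm x * m2norm y"
    unfolding times_mat2_def by (rule m2norm_m2mult_le)
  show "m2norm (- x) = m2norm x" by (cases x) (simp add: uminus_mat2_def)
qed

lemma is_gcEP_iff: "is_gcEP a x \<longleftrightarrow> alg.is_gcep a x"
  by (simp add: alg.is_gcep_def is_gcEP_def root_null_def power2_eq_square)

lemma is_gDrazin_iff: "is_gDrazin a x \<longleftrightarrow> alg.is_gdrazin a x"
  by (simp add: alg.is_gdrazin_def is_gDrazin_def root_null_def quasinil_def)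

lemma is_gcEP2_iff: "is_gcEP2 M X \<longleftrightarrow> mat.is_gcep M X"
  by (simp add: mat.is_gcep_def is_gcEP2_def root_null_def m2pow_eq_power
      flip: times_mat2_def minus_mat2_def)

lemma gcEP_eqI: "is_gcEP a x \<Longrightarrow> gcEP a = x"
  unfolding gcEP_def by (rule the_equality) (auto simp: is_gcEP_iff intro: alg.gcep_unique)

lemma gDrazin_eqI: "is_gDrazin a x \<Longrightarrow> gDrazin a = x"
  unfolding gDrazin_def by (rule the_equality) (auto simp: is_gDrazin_iff intro: alg.gdrazin_unique)

lemma gcEP2_eqI: "is_gcEP2 M X \<Longrightarrow> gcEP2 M = X"
  unfolding gcEP2_def by (rule the_equality) (auto simp: is_gcEP2_iff intro: mat.gcep_unique)

section \<open>The generalized Drazin inverse of a core-EP invertible element\<close>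

definition drazin_term :: "'a::banach_star_algebra \<Rightarrow> 'a \<Rightarrow> nat \<Rightarrow> 'a" where
  "drazin_term a x n = x ^ Suc (Suc n) * a * ((1 - a * x) * a) ^ n * (1 - a * x)"

definition drazin_of_gcEP :: "'a::banach_star_algebra \<Rightarrow> 'a \<Rightarrow> 'a" where
  "drazin_of_gcEP a x = x + (\<Sum>n. drazin_term a x n)"

context
  fixes a x :: "'a::banach_star_algebra"
  assumes gcEP: "is_gcEP a x"
begin

lemma alg_is_gcep: "alg.is_gcep a x"
  using gcEP by (simp add: is_gcEP_iff)

lemma gcEP_compl_part_mult_compl: "(1 - a * x) * a * (1 - a * x) = (1 - a * x) * a"
  using alg.gcep_compl_mult_proj[OF alg_is_gcep] by (simp add: right_diff_distrib mult.assoc)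

lemma gcEP_compl_part_power: "((1 - a * x) * a) ^ Suc n = (1 - a * x) * a ^ Suc n"
proof (induct n)
  case 0 then show ?case by simp
next
  case (Suc n)
  have "((1 - a * x) * a) ^ Suc (Suc n) = (1 - a * x) * a * (1 - a * x) * a ^ Suc n"
    by (simp only: power_Suc[of _ "Suc n"] Suc mult.assoc)
  then show ?case by (simp only: gcEP_compl_part_mult_compl) (simp add: mult.assoc)
qed

lemma gcEP_root_null_compl_part_power: "root_null (\<lambda>n. norm (((1 - a * x) * a) ^ n))"
  using alg.gcep_root_null_compl_power[OF alg_is_gcep]
  by (simp only: gcEP_compl_part_power
      flip: root_null_Suc_iff[of "\<lambda>n. norm (((1 - a * x) * a) ^ n)", OF norm_ge_zero])

lemma summable_drazin_term: "summable (drazin_term a x)"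
proof -
  let ?u = "(1 - a * x) * a"
  let ?K = "norm x ^ 2 * norm a * norm (1 - a * x)"
  have "norm (drazin_term a x n) \<le> ?K * norm (?u ^ n) * norm x ^ n" for n
  proof -
    have "norm (drazin_term a x n)
        \<le> norm (x ^ Suc (Suc n)) * norm a * norm (?u ^ n) * norm (1 - a * x)"
      unfolding drazin_term_def
      by (intro order_trans[OF norm_mult_ineq] mult_right_mono order_refl norm_ge_zero)
    also have "\<dots> \<le> norm x ^ Suc (Suc n) * norm a * norm (?u ^ n) * norm (1 - a * x)"
      by (intro mult_right_mono norm_power_ineq) auto
    finally show ?thesis by (simp add: power2_eq_square mult_ac)
  qed
  moreover have "root_null (\<lambda>n. ?K * norm (?u ^ n) * norm x ^ n)"
    by (intro root_null_mult_power root_null_const_mult gcEP_root_null_compl_part_power) auto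
  ultimately have "root_null (\<lambda>n. norm (drazin_term a x n))"
    by (rule root_null_mono[OF norm_ge_zero])
  then show ?thesis
    by (intro root_test_convergence[of _ 0]) (simp_all add: root_null_def)
qed

lemma gcEP_proj_mult_drazin_term: "a * x * drazin_term a x n = drazin_term a x n"
  using alg.gcep_proj_mult[OF alg_is_gcep]
  by (simp add: drazin_term_def power_Suc mult.assoc[symmetric])

lemma gcEP_drazin_term_mult_proj: "drazin_term a x n * (a * x) = 0"
  using alg.gcep_proj_idem[OF alg_is_gcep]
  by (simp add: drazin_term_def mult.assoc left_diff_distrib)

lemma gcEP_drazin_term_mult: "drazin_term a x n * a = a * drazin_term a x (Suc n)"
proof -
  let ?q = "1 - a * x"
  have "a * drazin_term a x (Suc n) = (a * (x * x)) * x ^ Suc n * a * (?q * a) ^ Suc n * ?q"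
    by (simp add: drazin_term_def mult.assoc)
  also have "\<dots> = x ^ Suc (Suc n) * a * ((?q * a) ^ n * (?q * a * ?q))"
    by (simp only: alg.gcep_square[OF alg_is_gcep] power_Suc2[of "?q * a"] power_Suc[of x "Suc n"]
        mult.assoc)
  also have "\<dots> = drazin_term a x n * a"
    by (simp only: gcEP_compl_part_mult_compl) (simp add: drazin_term_def mult.assoc)
  finally show ?thesis by simp
qed

lemma gcEP_mult_drazin_term_0: "a * drazin_term a x 0 = x * a - a * x"
proof -
  have "a * drazin_term a x 0 = (a * (x * x)) * a * (1 - a * x)"
    by (simp add: drazin_term_def mult.assoc)
  also have "\<dots> = x * a - x * a * (a * x)"
    by (simp add: alg.gcep_square[OF alg_is_gcep] right_diff_distrib mult.assoc)
  finally show ?thesis by (simp add: alg.gcep_XM_proj[OF alg_is_gcep])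
qed

lemma gcEP_proj_mult_drazin_series: "a * x * (\<Sum>n. drazin_term a x n) = (\<Sum>n. drazin_term a x n)"
  by (simp add: suminf_mult[OF summable_drazin_term, symmetric] gcEP_proj_mult_drazin_term)

lemma gcEP_drazin_series_mult_proj: "(\<Sum>n. drazin_term a x n) * (a * x) = 0"
  by (simp add: suminf_mult2[OF summable_drazin_term] gcEP_drazin_term_mult_proj)

lemma gcEP_drazin_series_mult:
  "(\<Sum>n. drazin_term a x n) * a = a * (\<Sum>n. drazin_term a x n) - (x * a - a * x)"
proof -
  have "(\<Sum>n. drazin_term a x n) * a = (\<Sum>n. a * drazin_term a x (Suc n))"
    by (simp add: suminf_mult2[OF summable_drazin_term] gcEP_drazin_term_mult)
  also have "\<dots> = a * ((\<Sum>n. drazin_term a x n) - drazin_term a x 0)"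
    using summable_drazin_term
    by (simp add: suminf_mult summable_Suc_iff suminf_split_head)
  finally show ?thesis by (simp add: right_diff_distrib gcEP_mult_drazin_term_0)
qed

lemma gcEP_mult_drazin_of_gcEP:
  shows "a * drazin_of_gcEP a x = a * x + a * (\<Sum>n. drazin_term a x n)"
    and "drazin_of_gcEP a x * a = a * x + a * (\<Sum>n. drazin_term a x n)"
  by (simp_all add: drazin_of_gcEP_def distrib_left distrib_right gcEP_drazin_series_mult)

lemma gcEP_drazin_of_gcEP_outer_inverse:
  "drazin_of_gcEP a x * a * drazin_of_gcEP a x = drazin_of_gcEP a x"
proof -
  define S where "S = (\<Sum>n. drazin_term a x n)"
  have pS: "a * x * S = S" and Sp: "S * (a * x) = 0"
    unfolding S_def by (fact gcEP_proj_mult_drazin_series gcEP_drazin_series_mult_proj)+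
  have "S * x = S * (a * x) * x" "S * S = S * (a * x) * S"
    using alg.gcep_proj_mult[OF alg_is_gcep] pS by (simp_all add: mult.assoc)
  then have Sx: "S * x = 0" and SS: "S * S = 0" by (simp_all add: Sp)
  have "drazin_of_gcEP a x * a * drazin_of_gcEP a x = (a * x + a * S) * (x + S)"
    by (simp only: gcEP_mult_drazin_of_gcEP(2) S_def) (simp only: drazin_of_gcEP_def)
  also have "\<dots> = a * x * x + a * x * S + a * (S * x) + a * (S * S)"
    by (simp add: algebra_simps)
  also have "\<dots> = x + S"
    by (simp add: alg.gcep_proj_mult[OF alg_is_gcep] pS Sx SS)
  finally show ?thesis by (simp add: drazin_of_gcEP_def S_def)
qed

lemma gcEP_drazin_residual_eq:
  "a - a * a * drazin_of_gcEP a x = a - a * (a * x) - a * (a * (\<Sum>n. drazin_term a x n))"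
  by (simp add: mult.assoc gcEP_mult_drazin_of_gcEP(1) right_diff_distrib distrib_left)

lemma gcEP_mult_drazin_of_gcEP_mult_proj: "a * a * drazin_of_gcEP a x * (a * x) = a * (a * x)"
proof -
  have "a * drazin_of_gcEP a x * (a * x) = (a * x + a * (\<Sum>n. drazin_term a x n)) * (a * x)"
    by (simp only: gcEP_mult_drazin_of_gcEP(1))
  also have "\<dots> = a * x * (a * x) + a * ((\<Sum>n. drazin_term a x n) * (a * x))"
    by (simp only: distrib_right mult.assoc)
  also have "\<dots> = a * x"
    by (simp add: alg.gcep_proj_idem[OF alg_is_gcep] gcEP_drazin_series_mult_proj)
  finally show ?thesis by (simp add: mult.assoc)
qed

lemma gcEP_drazin_residual_mult_compl:
  "(a - a * a * drazin_of_gcEP a x) * (1 - a * x) = a - a * a * drazin_of_gcEP a x"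
  using gcEP_mult_drazin_of_gcEP_mult_proj by (simp add: left_diff_distrib right_diff_distrib)

lemma gcEP_proj_mult_mult_drazin_series:
  "a * x * (a * (\<Sum>n. drazin_term a x n)) = a * (\<Sum>n. drazin_term a x n)"
proof -
  define S where "S = (\<Sum>n. drazin_term a x n)"
  have pS: "a * x * S = S" unfolding S_def by (rule gcEP_proj_mult_drazin_series)
  have "a * S = a * (a * x * S)" by (simp only: pS)
  also have "\<dots> = a * (a * x) * S" by (simp only: mult.assoc)
  also have "\<dots> = a * x * a * (a * x) * S" by (subst alg.gcep_proj_invariant[OF alg_is_gcep]) (rule refl)
  also have "\<dots> = a * x * (a * (a * x * S))" by (simp only: mult.assoc)
  also have "\<dots> = a * x * (a * S)" by (simp only: pS)
  finally show ?thesis by (simp add: S_def)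
qed

lemma gcEP_compl_mult_drazin_residual:
  "(1 - a * x) * (a - a * a * drazin_of_gcEP a x) = (1 - a * x) * a"
proof -
  let ?aS = "a * (\<Sum>n. drazin_term a x n)"
  have "(1 - a * x) * (a * ?aS) = (1 - a * x) * (a * (a * x * ?aS))"
    by (simp only: gcEP_proj_mult_mult_drazin_series)
  also have "\<dots> = (1 - a * x) * a * (a * x) * ?aS" by (simp only: mult.assoc)
  also have "\<dots> = 0" by (simp add: alg.gcep_compl_mult_proj[OF alg_is_gcep])
  finally have "(1 - a * x) * (a * ?aS) = 0" .
  then show ?thesis
    using alg.gcep_compl_mult_proj[OF alg_is_gcep, unfolded mult.assoc]
    unfolding gcEP_drazin_residual_eq by (simp add: right_diff_distrib)
qed

lemma gcEP_drazin_residual_power: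
  "(a - a * a * drazin_of_gcEP a x) ^ Suc n
    = (a - a * a * drazin_of_gcEP a x) * ((1 - a * x) * a) ^ n"
proof (induct n)
  case 0 then show ?case by simp
next
  case (Suc n)
  let ?w = "a - a * a * drazin_of_gcEP a x" and ?u = "(1 - a * x) * a"
  have "?w ^ Suc (Suc n) = ?w * (1 - a * x) * (?w * ?u ^ n)"
    by (simp only: power_Suc[of ?w "Suc n"] Suc gcEP_drazin_residual_mult_compl)
  also have "\<dots> = ?w * (((1 - a * x) * ?w) * ?u ^ n)" by (simp only: mult.assoc)
  also have "\<dots> = ?w * ?u ^ Suc n"
    by (simp only: gcEP_compl_mult_drazin_residual power_Suc)
  finally show ?case .
qed

lemma is_gDrazin_drazin_of_gcEP: "is_gDrazin a (drazin_of_gcEP a x)"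
proof -
  let ?w = "a - a * a * drazin_of_gcEP a x"
  have "root_null (\<lambda>n. norm ?w * norm (((1 - a * x) * a) ^ n))"
    by (intro root_null_const_mult gcEP_root_null_compl_part_power norm_ge_zero)
  then have "root_null (\<lambda>n. norm (?w ^ Suc n))"
    by (rule root_null_mono[OF norm_ge_zero, rotated])
      (simp only: gcEP_drazin_residual_power norm_mult_ineq)
  then have "root_null (\<lambda>n. norm (?w ^ n))"
    by (subst (asm) root_null_Suc_iff) auto
  moreover have "a * drazin_of_gcEP a x = drazin_of_gcEP a x * a"
    by (simp only: gcEP_mult_drazin_of_gcEP)
  ultimately show ?thesis
    unfolding is_gDrazin_def quasinil_def root_null_def[symmetric]
    using gcEP_drazin_of_gcEP_outer_inverse by blast
qed

lemma gcEP_proj_mult_drazin_proj: "a * x * (a * drazin_of_gcEP a x) = a * drazin_of_gcEP a x"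
  by (simp add: gcEP_mult_drazin_of_gcEP(1) distrib_left alg.gcep_proj_idem[OF alg_is_gcep]
      gcEP_proj_mult_mult_drazin_series)

end

lemma gcEP_proj_absorbs:
  assumes gcEP: "is_gcEP a x" and "api a * b = 0"
  shows "a * x * b = b"
proof -
  let ?z = "drazin_of_gcEP a x"
  have b_eq: "b = a * ?z * b"
    using assms(2) gDrazin_eqI[OF is_gDrazin_drazin_of_gcEP[OF gcEP]]
    by (simp add: api_def left_diff_distrib)
  then have "a * x * b = a * x * (a * ?z * b)" by (rule arg_cong)
  also have "\<dots> = a * x * (a * ?z) * b" by (simp only: mult.assoc)
  also have "\<dots> = b" by (simp only: gcEP_proj_mult_drazin_proj[OF gcEP] b_eq[symmetric])
  finally show ?thesis .
qed

section \<open>Upper triangular matrices\<close>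

fun upper_corner :: "'a::ring_1 \<Rightarrow> 'a \<Rightarrow> 'a \<Rightarrow> nat \<Rightarrow> 'a" where
  "upper_corner a b d 0 = 0"
| "upper_corner a b d (Suc n) = a * upper_corner a b d n + b * d ^ n"

lemma m2pow_upper_triangular:
  "m2pow (Mat2 a b 0 d) n = Mat2 (a ^ n) (upper_corner a b d n) 0 (d ^ n)"
  by (induct n) (simp_all add: m2one_def)

context
  fixes a b d x :: "'a::banach_star_algebra"
  assumes gcEP: "is_gcEP a x" and absorb: "a * x * b = b"
begin

lemma gcEP_proj_mult_upper_corner: "a * x * upper_corner a b d n = upper_corner a b d n"
proof (induct n)
  case 0 then show ?case by simp
next
  case (Suc n)
  let ?p = "a * x" and ?c = "upper_corner a b d n"
  have "?p * upper_corner a b d (Suc n) = ?p * a * ?c + (?p * b) * d ^ n"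
    by (simp add: distrib_left mult.assoc)
  also have "\<dots> = ?p * a * (?p * ?c) + (?p * b) * d ^ n" by (simp only: Suc)
  also have "\<dots> = (?p * a * ?p) * ?c + b * d ^ n"
    by (simp only: absorb) (simp only: mult.assoc)
  also have "\<dots> = a * (?p * ?c) + b * d ^ n"
    by (simp only: alg.gcep_proj_invariant[OF gcEP[unfolded is_gcEP_iff], symmetric])
      (simp only: mult.assoc)
  finally show ?case by (simp add: Suc)
qed

lemma gcEP_mult_upper_corner: "x * upper_corner a b d (Suc n) = upper_corner a b d n + x * b * d ^ n"
proof -
  let ?p = "a * x" and ?c = "upper_corner a b d n"
  have "x * upper_corner a b d (Suc n) = x * a * ?c + x * b * d ^ n"
    by (simp add: distrib_left mult.assoc)
  also have "\<dots> = x * a * (?p * ?c) + x * b * d ^ n" by (simp only: gcEP_proj_mult_upper_corner)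
  also have "\<dots> = x * a * ?p * ?c + x * b * d ^ n" by (simp only: mult.assoc)
  also have "\<dots> = ?c + x * b * d ^ n"
    by (simp only: alg.gcep_XM_proj[OF gcEP[unfolded is_gcEP_iff]] gcEP_proj_mult_upper_corner)
  finally show ?thesis .
qed

lemma gcEP_upper_triangular_residual:
  "m2minus (m2pow (Mat2 a b 0 d) n)
      (m2mult (Mat2 x (- (x * b * y)) 0 y) (m2pow (Mat2 a b 0 d) (Suc n)))
    = Mat2 (a ^ n - x * a ^ Suc n) (- (x * b * (d ^ n - y * d ^ Suc n))) 0 (d ^ n - y * d ^ Suc n)"
  unfolding m2pow_upper_triangular m2mult.simps m2minus.simps gcEP_mult_upper_corner
  by (simp add: algebra_simps)

end

lemma is_gcEP2_upper_triangular:
  fixes a b d x y :: "'a::banach_star_algebra"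
  assumes gx: "is_gcEP a x" and gy: "is_gcEP d y" and absorb: "a * x * b = b"
  shows "is_gcEP2 (Mat2 a b 0 d) (Mat2 x (- (x * b * y)) 0 y)"
proof -
  let ?M = "Mat2 a b 0 d" and ?X = "Mat2 x (- (x * b * y)) 0 y"
  have ga: "alg.is_gcep a x" and gd: "alg.is_gcep d y" using gx gy by (simp_all add: is_gcEP_iff)
  have sq: "a * (x * x) = x" "a * (x * (x * w)) = x * w" "d * (y * y) = y" for w
    using alg.gcep_square[OF ga] alg.gcep_square[OF gd] by (simp_all add: mult.assoc[symmetric])
  have absorb': "a * (x * (b * w)) = b * w" for w
    using absorb by (simp add: mult.assoc[symmetric])
  have "m2mult ?M (m2mult ?X ?X) = ?X"
    by (simp add: algebra_simps sq absorb')
  moreover have "m2invol (m2mult ?M ?X) = m2mult ?M ?X"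
  proof -
    have "m2mult ?M ?X = Mat2 (a * x) 0 0 (d * y)" by (simp add: algebra_simps absorb')
    then show ?thesis using alg.gcep_star[OF ga] alg.gcep_star[OF gd] by (simp add: invol_zero)
  qed
  moreover have "root_null (\<lambda>n. m2norm (m2minus (m2pow ?M n) (m2mult ?X (m2pow ?M (Suc n)))))"
  proof -
    let ?ea = "\<lambda>n. norm (a ^ n - x * a ^ Suc n)" and ?ed = "\<lambda>n. norm (d ^ n - y * d ^ Suc n)"
    have "m2norm (m2minus (m2pow ?M n) (m2mult ?X (m2pow ?M (Suc n))))
        \<le> ?ea n + norm (x * b) * ?ed n + ?ed n" for n
      unfolding gcEP_upper_triangular_residual[OF gx absorb] m2norm.simps
      using norm_mult_ineq[of "x * b" "d ^ n - y * d ^ Suc n"] by simp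
    moreover have "root_null (\<lambda>n. ?ea n + norm (x * b) * ?ed n + ?ed n)"
      using alg.gcep_root_null[OF ga] alg.gcep_root_null[OF gd]
      by (intro root_null_add root_null_const_mult) auto
    ultimately show ?thesis by (rule root_null_mono[OF mat.nrm_nonneg])
  qed
  ultimately show ?thesis by (simp add: is_gcEP2_def root_null_def)
qed

theorem corollary4p8:
  fixes a b d :: "'a::banach_star_algebra"
  assumes "\<exists>x. is_gcEP a x"
    and "\<exists>y. is_gcEP d y"
    and "api a * b = 0"
  shows "(\<exists>!X. is_gcEP2 (Mat2 a b 0 d) X) \<and>
         gcEP2 (Mat2 a b 0 d) = Mat2 (gcEP a) (- (gcEP a * b * gcEP d)) 0 (gcEP d)"
proof -
  obtain x y where gx: "is_gcEP a x" and gy: "is_gcEP d y" using assms(1,2) by blast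
  have gX: "is_gcEP2 (Mat2 a b 0 d) (Mat2 x (- (x * b * y)) 0 y)"
    by (rule is_gcEP2_upper_triangular[OF gx gy gcEP_proj_absorbs[OF gx assms(3)]])
  then have "\<exists>!X. is_gcEP2 (Mat2 a b 0 d) X"
    by (auto simp: is_gcEP2_iff intro: mat.gcep_unique)
  with gX show ?thesis by (simp add: gcEP2_eqI gcEP_eqI[OF gx] gcEP_eqI[OF gy])
qed

end
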